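(* Let $X$ be a compact metric space, $f\colon X\to X$ continuous, and let $S\in 2^X$ be a periodic point of $2^f$ with fundamental period $k$. Then for every $0<j<k$, $f^j(S)\not\subseteq S$.
   Context: $2^X$ is the space of nonempty closed subsets of $X$ with the Hausdorff metric and $2^f(C)=f(C)$; $f^j(S)=(2^f)^j(S)$. *)

theory Defs
  imports "HOL-Analysis.Analysis"
begin

text \<open>The hyperspace 2^X of a metric space X: nonempty closed subsets of X
(carrying the Hausdorff metric, which plays no role in the statement).\<close>
definition hyperspace :: "'a::metric_space set \<Rightarrow> 'a set set" where
  "hyperspace X = {C. C \<subseteq> X \<and> C \<noteq> {} \<and> closed C}"

definition induced_map :: "('a \<Rightarrow> 'a) \<Rightarrow> 'a set \<Rightarrow> 'a set" where
  "induced_map f C = f ` C"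

definition periodic_with_fundamental_period :: "('b \<Rightarrow> 'b) \<Rightarrow> 'b \<Rightarrow> nat \<Rightarrow> bool" where
  "periodic_with_fundamental_period g S k \<longleftrightarrow>
     0 < k \<and> (g ^^ k) S = S \<and> (\<forall>j. 0 < j \<and> j < k \<longrightarrow> (g ^^ j) S \<noteq> S)"

end

theory Submission
  imports Defs
begin

text \<open>Only monotonicity of the induced map g = 2^f matters. From g^j(S) \<subseteq> S one gets
g^(mj)(S) \<subseteq> S for every m, and if g^k(S) = S then
S = g^(jk)(S) = g^j(g^((k-1)j)(S)) \<subseteq> g^j(S), so g^j(S) = S, contradicting the
minimality of k.\<close>

lemma mono_induced_map: "mono (induced_map f)"
  unfolding mono_def induced_map_def by blast

lemma funpow_mult_le_of_le:
  fixes g :: "'a::order \<Rightarrow> 'a"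
  assumes "mono g" and "(g ^^ j) S \<le> S"
  shows "(g ^^ (m * j)) S \<le> S"
proof (induction m)
  case 0
  show ?case by simp
next
  case (Suc m)
  have "(g ^^ (Suc m * j)) S = (g ^^ j) ((g ^^ (m * j)) S)"
    by (simp add: funpow_add)
  also have "\<dots> \<le> (g ^^ j) S"
    using Suc funpow_mono[OF \<open>mono g\<close>] by blast
  finally show ?case using assms(2) by simp
qed

lemma funpow_mult_fixed:
  assumes "(g ^^ k) S = S"
  shows "(g ^^ (m * k)) S = S"
proof (induction m)
  case (Suc m)
  then show ?case by (simp add: funpow_add assms)
qed simp

lemma funpow_eq_of_le_periodic:
  fixes g :: "'a::order \<Rightarrow> 'a"
  assumes "mono g" and "(g ^^ k) S = S" and "0 < k" and le: "(g ^^ j) S \<le> S"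
  shows "(g ^^ j) S = S"
proof (rule antisym[OF le])
  have "S = (g ^^ ((Suc (k - 1)) * j)) S"
    using funpow_mult_fixed[OF assms(2), of j] \<open>0 < k\<close> by (simp add: mult.commute)
  also have "\<dots> = (g ^^ j) ((g ^^ ((k - 1) * j)) S)"
    by (simp add: funpow_add)
  also have "\<dots> \<le> (g ^^ j) S"
    using funpow_mult_le_of_le[OF assms(1) le] funpow_mono[OF \<open>mono g\<close>] by blast
  finally show "S \<le> (g ^^ j) S" .
qed

theorem lemma4p5:
  fixes X :: "'a::metric_space set" and f :: "'a \<Rightarrow> 'a" and S :: "'a set" and k :: nat
  assumes "compact X"
    and "continuous_on X f" and "f ` X \<subseteq> X"
    and "S \<in> hyperspace X"
    and "periodic_with_fundamental_period (induced_map f) S k"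
  shows "\<forall>j. 0 < j \<and> j < k \<longrightarrow> \<not> ((induced_map f ^^ j) S \<subseteq> S)"
proof (intro allI impI notI)
  fix j
  assume j: "0 < j \<and> j < k" and sub: "(induced_map f ^^ j) S \<subseteq> S"
  have "(induced_map f ^^ j) S = S"
    using funpow_eq_of_le_periodic[OF mono_induced_map _ _ sub] assms(5)
    unfolding periodic_with_fundamental_period_def by blast
  then show False
    using assms(5) j unfolding periodic_with_fundamental_period_def by blast
qed

end
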